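(* Let $g\in G\setminus\{0\}$, $e\in E_N$, and $\sigma\in\Sigma_{E_N}$ be such that $(d\sigma)_p-\sigma_e=g$ for all $p\in\hat\partial e$, and assume $\partial\hat\partial\partial\hat\partial e\subseteq E_N$. Then either $|(\mathrm{supp}\,\sigma)^+|\ge7$, or $|(\mathrm{supp}\,\sigma)^+|=6$ and $|(\mathrm{supp}\,d\sigma)^+|\ge12$.
   Context: Work on $\mathbb Z^4$; oriented edges come in pairs $e,-e$; $dx_j=(x,x+\mathbf e_j)$ positively oriented. For $p=dx_{j_1}\wedge dx_{j_2}$ ($j_1<j_2$), $\partial p=\{dx_{j_1},d(x+\mathbf e_{j_1})_{j_2},-d(x+\mathbf e_{j_2})_{j_1},-dx_{j_2}\}$, $\partial(-p)=-\partial p$ (positive plaquettes are the $dx_{j_1}\wedge dx_{j_2}$). $\hat\partial e=\{p:e\in\partial p\}$; for sets $\partial A=\bigcup_{p\in A}\partial p$, $\hat\partial B=\bigcup_{e\in B}\hat\partial e$. $B_N=[-N,N]^4\cap\mathbb Z^4$; $E_N,P_N$ the oriented edges/plaquettes with all vertices in $B_N$. $G=\mathbb Z_n$. $\Sigma_{E_N}$: maps $\sigma:E_N\to G$ with $\sigma_{-e}=-\sigma_e$; $(d\sigma)_p=\sum_{e\in\partial p}\sigma_e$. $\mathrm{supp}$ denotes support and $(\cdot)^+$ the positively oriented elements. *)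

theory Defs
  imports Main
begin

text \<open>Lattice Z^4: vertices are maps nat => int vanishing outside the coordinates 0..3.
  Directions j are 0..3 (standing for e_1..e_4).\<close>

type_synonym vtx = "nat \<Rightarrow> int"

definition Z4 :: "vtx set" where
  "Z4 = {x. \<forall>j\<ge>4. x j = 0}"

definition shift :: "vtx \<Rightarrow> nat \<Rightarrow> vtx" where
  "shift x j = x(j := x j + 1)"

definition box :: "nat \<Rightarrow> vtx set" where
  "box N = {x \<in> Z4. \<forall>j<4. \<bar>x j\<bar> \<le> int N}"

text \<open>Oriented edge (x, j, s): s = True is dx_j = (x, x+e_j); s = False is -dx_j.\<close>
type_synonym edge = "vtx \<times> nat \<times> bool"

definition is_edge :: "edge \<Rightarrow> bool" where
  "is_edge e = (case e of (x, j, s) \<Rightarrow> x \<in> Z4 \<and> j < 4)"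

definition eneg :: "edge \<Rightarrow> edge" where
  "eneg e = (case e of (x, j, s) \<Rightarrow> (x, j, \<not> s))"

definition epos :: "edge \<Rightarrow> bool" where
  "epos e = (case e of (x, j, s) \<Rightarrow> s)"

definition evertices :: "edge \<Rightarrow> vtx set" where
  "evertices e = (case e of (x, j, s) \<Rightarrow> {x, shift x j})"

definition E :: "nat \<Rightarrow> edge set" where
  "E N = {e. is_edge e \<and> evertices e \<subseteq> box N}"

text \<open>Oriented plaquette (x, j1, j2, s) with j1 < j2: s = True is dx_j1 \<and> dx_j2,
  s = False its negative.\<close>
type_synonym plaq = "vtx \<times> nat \<times> nat \<times> bool"

definition is_plaq :: "plaq \<Rightarrow> bool" where
  "is_plaq p = (case p of (x, j1, j2, s) \<Rightarrow> x \<in> Z4 \<and> j1 < j2 \<and> j2 < 4)"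

definition ppos :: "plaq \<Rightarrow> bool" where
  "ppos p = (case p of (x, j1, j2, s) \<Rightarrow> s)"

definition pvertices :: "plaq \<Rightarrow> vtx set" where
  "pvertices p = (case p of (x, j1, j2, s) \<Rightarrow>
      {x, shift x j1, shift x j2, shift (shift x j1) j2})"

definition P :: "nat \<Rightarrow> plaq set" where
  "P N = {p. is_plaq p \<and> pvertices p \<subseteq> box N}"

definition bdry :: "plaq \<Rightarrow> edge set" where
  "bdry p = (case p of (x, j1, j2, s) \<Rightarrow>
     (if s then {(x, j1, True), (shift x j1, j2, True), (shift x j2, j1, False), (x, j2, False)}
      else eneg ` {(x, j1, True), (shift x j1, j2, True), (shift x j2, j1, False), (x, j2, False)}))"

definition cobdry :: "edge \<Rightarrow> plaq set" where
  "cobdry e = {p. is_plaq p \<and> e \<in> bdry p}"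

definition bdry_set :: "plaq set \<Rightarrow> edge set" where
  "bdry_set A = (\<Union>p\<in>A. bdry p)"

definition cobdry_set :: "edge set \<Rightarrow> plaq set" where
  "cobdry_set B = (\<Union>e\<in>B. cobdry e)"

text \<open>G = Z_n is represented by {0..<n} with arithmetic mod n.
  sigma is in Sigma_{E_N} iff it takes values in Z_n on E_N and sigma(-e) = -sigma(e).\<close>

definition Sigma :: "int \<Rightarrow> nat \<Rightarrow> (edge \<Rightarrow> int) set" where
  "Sigma n N = {\<sigma>. \<forall>e\<in>E N. \<sigma> e \<in> {0..<n} \<and> \<sigma> (eneg e) = (- \<sigma> e) mod n}"

definition dsig :: "int \<Rightarrow> (edge \<Rightarrow> int) \<Rightarrow> plaq \<Rightarrow> int" where
  "dsig n \<sigma> p = (\<Sum>e\<in>bdry p. \<sigma> e) mod n"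

end

theory Submission
  imports Defs
begin

(* Each of the six plaquettes through e = dx_j satisfies (d sigma)_p - sigma_e = g <> 0, so it
   contains a second edge carrying charge; these six witness edges are distinct because two
   plaquettes through e share no edge other than e. If sigma has exactly six positive charged
   edges, they are precisely the witnesses, hence sigma_e = 0 and d sigma = g on all six plaquettes
   through e. Moreover each witness lies in the box x_j <= v_j <= x_j + 1, |v_i - x_i| <= 1 around
   e, and it bounds a plaquette leaving that box; the other three edges of this plaquette are
   uncharged, so d sigma there is +-sigma of the witness, which is nonzero. These six escape
   plaquettes are distinct from each other and from the six through e, giving twelve. *)

definition pos_edge :: "edge \<Rightarrow> edge" where
  "pos_edge f = (case f of (y, k, _) \<Rightarrow> (y, k, True))"

definition pos_plaq :: "plaq \<Rightarrow> plaq" where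
  "pos_plaq p = (case p of (z, a, b, _) \<Rightarrow> (z, a, b, True))"

definition unshift :: "vtx \<Rightarrow> nat \<Rightarrow> vtx" where
  "unshift x j = x(j := x j - 1)"

lemma shift_neq [simp]: "shift x k \<noteq> x" "x \<noteq> shift x k"
  by (auto simp: shift_def fun_upd_idem_iff dest: sym)

lemma shift_unshift [simp]: "shift (unshift y m) m = y"
  by (simp add: shift_def unshift_def)

lemma unshift_neq [simp]: "unshift y m \<noteq> y" "y \<noteq> unshift y m"
  by (auto simp: unshift_def fun_upd_idem_iff dest: sym)

lemma pos_edge_simp [simp]: "pos_edge (y, k, s) = (y, k, True)"
  by (simp add: pos_edge_def)

lemma pos_plaq_simp [simp]: "pos_plaq (z, a, b, s) = (z, a, b, True)"
  by (simp add: pos_plaq_def)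

lemma eneg_simp [simp]: "eneg (y, k, s) = (y, k, \<not> s)"
  by (simp add: eneg_def)

lemma evertices_simp [simp]: "evertices (y, k, s) = {y, shift y k}"
  by (simp add: evertices_def)

lemma epos_simp [simp]: "epos (y, k, s) = s"
  by (simp add: epos_def)

lemma ppos_simp [simp]: "ppos (z, a, b, s) = s"
  by (simp add: ppos_def)

lemma eneg_eneg [simp]: "eneg (eneg f) = f"
  by (cases f) auto

lemma epos_pos_edge [simp]: "epos (pos_edge f)"
  by (cases f) auto

lemma pos_edge_cases: "pos_edge f = f \<or> f = eneg (pos_edge f)"
  by (cases f) auto

lemma pos_edge_eq_iff: "pos_edge f' = pos_edge f \<longleftrightarrow> f' = f \<or> f' = eneg f"
  by (cases f; cases f') auto

lemma E_eneg: "f \<in> E N \<Longrightarrow> eneg f \<in> E N"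
  by (cases f) (auto simp: E_def is_edge_def)

lemma E_pos_edge: "f \<in> E N \<Longrightarrow> pos_edge f \<in> E N"
  by (cases f) (auto simp: E_def is_edge_def)

lemma bdry_neg: "bdry (z, a, b, \<not> s) = eneg ` bdry (z, a, b, s)"
  by (cases s) (simp_all add: bdry_def image_image)

lemma finite_bdry: "finite (bdry p)"
  by (cases p) (auto simp: bdry_def)

lemma pos_edge_image_bdry:
  "pos_edge ` bdry (z, a, b, s) = {(z, a, True), (shift z a, b, True), (shift z b, a, True), (z, b, True)}"
  by (cases s) (simp_all add: bdry_def image_image)

lemma pos_edge_image_bdry_pos_plaq [simp]: "pos_edge ` bdry (pos_plaq p) = pos_edge ` bdry p"
  by (cases p) (simp add: pos_edge_image_bdry)

lemma inj_on_pos_edge_bdry: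
  assumes "is_plaq p" shows "inj_on pos_edge (bdry p)"
proof -
  obtain z a b s where p: "p = (z, a, b, s)" by (cases p)
  with assms have "a \<noteq> b" by (simp add: is_plaq_def)
  then have "inj_on pos_edge (bdry (z, a, b, True))"
    by (simp add: bdry_def inj_on_def)
  then show ?thesis
    using p bdry_neg[of z a b True] by (cases s) (auto simp: inj_on_def)
qed

lemma bdry_pos_plaq_cases: "bdry (pos_plaq p) = bdry p \<or> bdry (pos_plaq p) = eneg ` bdry p"
proof -
  obtain z a b s where p: "p = (z, a, b, s)" by (cases p)
  then show ?thesis
    using bdry_neg[of z a b True] by (cases s) (simp_all add: image_image)
qed

lemma exists_orientation_containing:
  assumes "is_plaq Q" "pos_edge f \<in> pos_edge ` bdry Q"
  obtains q where "pos_plaq q = pos_plaq Q" "is_plaq q" "f \<in> bdry q"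
proof -
  obtain z a b s where Q: "Q = (z, a, b, s)" by (cases Q)
  obtain f' where "f' \<in> bdry Q" "pos_edge f' = pos_edge f"
    using assms(2) by (auto simp del: pos_edge_simp)
  then have f': "f' \<in> bdry Q" "f' = f \<or> f' = eneg f"
    using pos_edge_eq_iff by blast+
  then consider "f \<in> bdry (z, a, b, s)" | "f \<in> bdry (z, a, b, \<not> s)"
    using Q bdry_neg[of z a b s] by force
  then show ?thesis
    using that assms(1) Q by cases (auto simp: is_plaq_def)
qed

lemma eneg_image_subset_E_iff: "eneg ` A \<subseteq> E N \<longleftrightarrow> A \<subseteq> E N"
  using E_eneg[of "eneg _" N] by (auto simp: image_subset_iff dest: E_eneg)

lemma bdry_pos_plaq_subset_E_iff: "bdry (pos_plaq p) \<subseteq> E N \<longleftrightarrow> bdry p \<subseteq> E N"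
  using bdry_pos_plaq_cases[of p] eneg_image_subset_E_iff by metis

lemma in_P_if_bdry_subset_E:
  assumes "is_plaq p" "bdry p \<subseteq> E N" shows "p \<in> P N"
proof -
  obtain z a b s where p: "p = (z, a, b, s)" by (cases p)
  have "pvertices p \<subseteq> (\<Union>f\<in>bdry p. evertices f)"
    using p by (cases s) (auto simp: pvertices_def bdry_def)
  also have "\<dots> \<subseteq> box N"
    using assms(2) by (auto simp: E_def)
  finally show ?thesis
    using assms(1) by (simp add: P_def)
qed

lemma finite_box: "finite (box N)"
proof -
  have "box N \<subseteq> {f. \<forall>i. (i \<in> {0..<4} \<longrightarrow> f i \<in> {-int N..int N}) \<and> (i \<notin> {0..<4} \<longrightarrow> f i = 0)}"
    by (auto simp: box_def Z4_def abs_le_iff)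
  then show ?thesis
    by (rule finite_subset) (rule finite_set_of_finite_funs; simp)
qed

lemma finite_E: "finite (E N)"
proof -
  have "E N \<subseteq> box N \<times> {0..<4} \<times> UNIV"
    by (auto simp: E_def is_edge_def split: prod.splits)
  then show ?thesis
    by (rule finite_subset) (simp add: finite_box)
qed

lemma finite_P: "finite (P N)"
proof -
  have "P N \<subseteq> box N \<times> {0..<4} \<times> {0..<4} \<times> UNIV"
    by (auto simp: P_def is_plaq_def pvertices_def split: prod.splits)
  then show ?thesis
    by (rule finite_subset) (simp add: finite_box)
qed

section \<open>Charges and their exterior derivative\<close>

lemma Sigma_eneg:
  "\<sigma> \<in> Sigma n N \<Longrightarrow> f \<in> E N \<Longrightarrow> \<sigma> (eneg f) = (- \<sigma> f) mod n"
  by (simp add: Sigma_def)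

lemma Sigma_range:
  "\<sigma> \<in> Sigma n N \<Longrightarrow> f \<in> E N \<Longrightarrow> 0 \<le> \<sigma> f \<and> \<sigma> f < n"
  by (simp add: Sigma_def)

lemma Sigma_zero_iff_pos_edge:
  assumes "\<sigma> \<in> Sigma n N" "f \<in> E N"
  shows "\<sigma> f = 0 \<longleftrightarrow> \<sigma> (pos_edge f) = 0"
proof (cases "pos_edge f = f")
  case False
  then have "f = eneg (pos_edge f)"
    using pos_edge_cases by blast
  moreover have "pos_edge f \<in> E N"
    using assms(2) by (rule E_pos_edge)
  ultimately show ?thesis
    using Sigma_eneg[OF assms(1)] Sigma_range[OF assms(1)]
    by (smt (verit) zmod_zminus1_eq_if mod_pos_pos_trivial)
qed simp

lemma dsig_zero_iff_bdry_eneg: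
  assumes "\<sigma> \<in> Sigma n N" "bdry q' \<subseteq> E N" "bdry q = eneg ` bdry q'"
  shows "dsig n \<sigma> q = 0 \<longleftrightarrow> dsig n \<sigma> q' = 0"
proof -
  have "inj eneg"
    by (metis eneg_eneg injI)
  then have "sum \<sigma> (bdry q) = (\<Sum>f\<in>bdry q'. \<sigma> (eneg f))"
    using assms(3) by (simp add: sum.reindex inj_on_subset)
  also have "\<dots> = (\<Sum>f\<in>bdry q'. (- \<sigma> f) mod n)"
    using Sigma_eneg assms(1,2) by (intro sum.cong) auto
  finally have "dsig n \<sigma> q = (\<Sum>f\<in>bdry q'. - \<sigma> f) mod n"
    by (simp add: dsig_def mod_sum_eq)
  also have "\<dots> = (- sum \<sigma> (bdry q')) mod n"
    by (simp add: sum_negf)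
  finally show ?thesis
    by (simp add: dsig_def dvd_eq_mod_eq_0[symmetric])
qed

lemma dsig_pos_plaq_zero_iff:
  assumes "\<sigma> \<in> Sigma n N" "bdry p \<subseteq> E N"
  shows "dsig n \<sigma> (pos_plaq p) = 0 \<longleftrightarrow> dsig n \<sigma> p = 0"
proof (cases "bdry (pos_plaq p) = bdry p")
  case False
  then show ?thesis
    using bdry_pos_plaq_cases[of p] dsig_zero_iff_bdry_eneg[OF assms] by blast
qed (simp add: dsig_def)

lemma dsig_eq_single_edge:
  assumes "f \<in> bdry p" "\<forall>f'\<in>bdry p - {f}. \<sigma> f' = 0"
  shows "dsig n \<sigma> p = \<sigma> f mod n"
  using sum.remove[OF finite_bdry assms(1), of \<sigma>] assms(2) by (simp add: dsig_def)

lemma exists_other_edge_in_supp: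
  assumes "e \<in> bdry p" "(dsig n \<sigma> p - \<sigma> e) mod n = g" "g \<noteq> 0"
  shows "\<exists>f\<in>bdry p. f \<noteq> e \<and> \<sigma> f \<noteq> 0"
proof (rule ccontr)
  assume "\<not> ?thesis"
  then have "dsig n \<sigma> p = \<sigma> e mod n"
    using dsig_eq_single_edge[OF assms(1)] by blast
  then show False
    using assms(2,3) by (simp add: mod_diff_left_eq)
qed

section \<open>The plaquettes through an edge\<close>

(* The positive plaquette spanned by the directions k and m that contains the edge (y, k) and
   lies on the side c \<in> {1, -1} of it in direction m. *)
definition plaq_around :: "vtx \<Rightarrow> nat \<Rightarrow> nat \<Rightarrow> int \<Rightarrow> plaq" where
  "plaq_around y k m c = (if c = 1 then y else unshift y m, min k m, max k m, True)"

definition transverse :: "nat \<Rightarrow> (nat \<times> int) set" where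
  "transverse j = ({0..<4} - {j}) \<times> {1, -1}"

definition edge_box :: "vtx \<Rightarrow> nat \<Rightarrow> vtx set" where
  "edge_box x j = {v. v j - x j \<in> {0, 1} \<and> (\<forall>i. i \<noteq> j \<longrightarrow> \<bar>v i - x i\<bar> \<le> 1)}"

definition edge_box_edges :: "vtx \<Rightarrow> nat \<Rightarrow> edge set" where
  "edge_box_edges x j = {G. epos G \<and> evertices G \<subseteq> edge_box x j}"

lemma card_transverse: "j < 4 \<Longrightarrow> card (transverse j) = 6"
  by (simp add: transverse_def card_cartesian_product card_Diff_singleton)

lemma finite_transverse: "finite (transverse j)"
  by (simp add: transverse_def)

lemma is_plaq_plaq_around:
  "y \<in> Z4 \<Longrightarrow> k < 4 \<Longrightarrow> m < 4 \<Longrightarrow> m \<noteq> k \<Longrightarrow> is_plaq (plaq_around y k m c)"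
  by (auto simp: plaq_around_def is_plaq_def unshift_def Z4_def)

lemma ppos_plaq_around [simp]: "ppos (plaq_around y k m c)"
  by (simp add: plaq_around_def)

lemma pos_plaq_plaq_around [simp]: "pos_plaq (plaq_around y k m c) = plaq_around y k m c"
  by (simp add: plaq_around_def)

lemma pos_edge_image_bdry_plaq_around:
  assumes "m \<noteq> k" "z = (if c = 1 then y else unshift y m)"
  shows "pos_edge ` bdry (plaq_around y k m c) =
    {(z, k, True), (shift z k, m, True), (shift z m, k, True), (z, m, True)}"
  using assms by (cases "k < m") (auto simp: plaq_around_def pos_edge_image_bdry min_def max_def)

lemma edge_in_plaq_around:
  assumes "m \<noteq> k" "c \<in> {1, -1}"
  shows "(y, k, True) \<in> pos_edge ` bdry (plaq_around y k m c)"
  using assms pos_edge_image_bdry_plaq_around[OF assms(1) refl] by auto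

lemma vertices_plaq_around:
  assumes "m \<noteq> k" "c \<in> {1, -1}" "G \<in> pos_edge ` bdry (plaq_around y k m c)" "v \<in> evertices G"
  shows "v k - y k \<in> {0, 1} \<and> v m - y m \<in> {0, c} \<and> (\<forall>i. i \<noteq> k \<longrightarrow> i \<noteq> m \<longrightarrow> v i = y i)"
  using assms pos_edge_image_bdry_plaq_around[OF assms(1) refl]
  by (auto simp: shift_def unshift_def)

lemma far_vertex_plaq_around:
  assumes "m \<noteq> k" "c \<in> {1, -1}" "G \<in> pos_edge ` bdry (plaq_around y k m c)" "G \<noteq> (y, k, True)"
  shows "\<exists>v\<in>evertices G. v m = y m + c"
  using assms pos_edge_image_bdry_plaq_around[OF assms(1) refl]
  by (auto simp: shift_def unshift_def)

lemma plaq_around_edges_in_edge_box: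
  assumes "(m, c) \<in> transverse j" "G \<in> pos_edge ` bdry (plaq_around x j m c)"
  shows "G \<in> edge_box_edges x j"
proof -
  have "v \<in> edge_box x j" if "v \<in> evertices G" for v
    using vertices_plaq_around[OF _ _ assms(2) that] assms(1)
    by (auto simp: transverse_def edge_box_def)
  then show ?thesis
    using assms(2) by (auto simp: edge_box_edges_def)
qed

lemma plaq_around_common_edge:
  assumes "(m, c) \<in> transverse j" "(m', c') \<in> transverse j" "(m, c) \<noteq> (m', c')"
    and "G \<in> pos_edge ` bdry (plaq_around x j m c)" "G \<in> pos_edge ` bdry (plaq_around x j m' c')"
  shows "G = (x, j, True)"
proof (rule ccontr)
  assume "G \<noteq> (x, j, True)"
  have m: "m \<noteq> j" "c \<in> {1, -1}" and m': "m' \<noteq> j" "c' \<in> {1, -1}"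
    using assms(1,2) by (auto simp: transverse_def)
  obtain v where v: "v \<in> evertices G" "v m = x m + c"
    using far_vertex_plaq_around[OF m assms(4) \<open>G \<noteq> (x, j, True)\<close>] by blast
  have "v m' - x m' \<in> {0, c'}" "\<forall>i. i \<noteq> j \<longrightarrow> i \<noteq> m' \<longrightarrow> v i = x i"
    using vertices_plaq_around[OF m' assms(5) v(1)] by auto
  then show False
    using v(2) m(1,2) m'(2) assms(3) by (cases "m = m'") auto
qed

lemma inj_on_plaq_around: "inj_on (\<lambda>(m, c). plaq_around x j m c) (transverse j)"
proof (rule inj_onI, clarify)
  fix m c m' c'
  assume "(m, c) \<in> transverse j" "(m', c') \<in> transverse j"
  then have m: "m \<noteq> j" "c \<in> {1, -1}" and m': "m' \<noteq> j" "c' \<in> {1, -1}"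
    by (auto simp: transverse_def)
  assume eq: "plaq_around x j m c = plaq_around x j m' c'"
  then have "min j m = min j m'" "max j m = max j m'"
    by (simp_all add: plaq_around_def)
  then have "m = m'"
    using m(1) m'(1) by (metis max_def min_def)
  moreover have "c = c'"
    using eq m(2) m'(2) by (auto simp: plaq_around_def)
  ultimately show "m = m' \<and> c = c'" ..
qed

lemma exists_exit_direction:
  assumes "x \<in> Z4" "j < 4" "is_edge (y, k, True)" "(y, k) \<noteq> (x, j)"
    and "y \<in> edge_box x j" "shift y k \<in> edge_box x j"
  obtains m c where "m \<noteq> k" "m < 4" "c \<in> {1, -1}" "\<And>v. v m = y m + c \<Longrightarrow> v \<notin> edge_box x j"
proof (cases "k = j")
  case True
  with assms(5,6) have "y j = x j"
    by (auto simp: edge_box_def shift_def)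
  with True assms(4) obtain m where m: "y m \<noteq> x m" "m \<noteq> j"
    by (metis ext)
  then have "m < 4"
    using assms(1,3) by (simp add: Z4_def is_edge_def) (metis not_less)
  moreover have c: "y m - x m \<in> {1, -1}"
    using m assms(5) by (auto simp: edge_box_def)
  moreover have "v \<notin> edge_box x j" if "v m = y m + (y m - x m)" for v
  proof
    assume "v \<in> edge_box x j"
    then have "\<bar>v m - x m\<bar> \<le> 1"
      using m(2) by (simp add: edge_box_def)
    then show False
      using that c by auto
  qed
  ultimately show ?thesis
    using that m(2) True by blast
next
  case False
  let ?c = "if y j = x j then -1 else 1"
  have "y j - x j \<in> {0, 1}"
    using assms(5) by (simp add: edge_box_def)
  then show ?thesis
    using that[of j ?c] False assms(2) by (auto simp: edge_box_def)
qed

lemma exists_escape_plaq: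
  assumes "x \<in> Z4" "j < 4" "G \<in> edge_box_edges x j" "is_edge G" "G \<noteq> (x, j, True)"
  obtains Q where "is_plaq Q" "ppos Q" "G \<in> pos_edge ` bdry Q"
    "\<And>G'. G' \<in> pos_edge ` bdry Q \<Longrightarrow> G' = G \<or> G' \<notin> edge_box_edges x j"
proof -
  obtain y k where G: "G = (y, k, True)" "y \<in> Z4" "k < 4"
    using assms(3,4) by (cases G) (auto simp: edge_box_edges_def is_edge_def)
  have y: "is_edge (y, k, True)" "(y, k) \<noteq> (x, j)" "y \<in> edge_box x j" "shift y k \<in> edge_box x j"
    using assms(3-5) G by (auto simp: edge_box_edges_def)
  obtain m c where m: "m \<noteq> k" "m < 4" "c \<in> {1, -1}"
    and exit: "\<And>v. v m = y m + c \<Longrightarrow> v \<notin> edge_box x j"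
    using exists_exit_direction[OF assms(1,2) y] by blast
  let ?Q = "plaq_around y k m c"
  have "G' \<notin> edge_box_edges x j" if G': "G' \<in> pos_edge ` bdry ?Q" "G' \<noteq> G" for G'
  proof -
    obtain v where "v \<in> evertices G'" "v m = y m + c"
      using far_vertex_plaq_around[OF m(1,3) G'(1)] G'(2) G(1) by blast
    then show ?thesis
      using exit by (auto simp: edge_box_edges_def)
  qed
  moreover have "is_plaq ?Q"
    using is_plaq_plaq_around[OF G(2,3) m(2,1)] .
  moreover have "G \<in> pos_edge ` bdry ?Q"
    using edge_in_plaq_around[OF m(1,3)] G(1) by simp
  ultimately show ?thesis
    using that[of ?Q] by auto
qed

section \<open>An excited edge\<close>

definition edge_supp_pos :: "nat \<Rightarrow> (edge \<Rightarrow> int) \<Rightarrow> edge set" where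
  "edge_supp_pos N \<sigma> = {f \<in> E N. epos f \<and> \<sigma> f \<noteq> 0}"

definition plaq_supp_pos :: "int \<Rightarrow> nat \<Rightarrow> (edge \<Rightarrow> int) \<Rightarrow> plaq set" where
  "plaq_supp_pos n N \<sigma> = {p \<in> P N. ppos p \<and> dsig n \<sigma> p \<noteq> 0}"

locale excited_edge =
  fixes n :: int and N :: nat and g :: int and x :: vtx and j :: nat and s :: bool
    and \<sigma> :: "edge \<Rightarrow> int"
  assumes g_nonzero: "g \<noteq> 0"
    and edge_in_E: "(x, j, s) \<in> E N"
    and sigma_in_Sigma: "\<sigma> \<in> Sigma n N"
    and excitation: "\<forall>p\<in>cobdry (x, j, s). (dsig n \<sigma> p - \<sigma> (x, j, s)) mod n = g"
    and neighbourhood_in_E: "bdry_set (cobdry_set (bdry_set (cobdry (x, j, s)))) \<subseteq> E N"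
begin

lemma x_in_Z4: "x \<in> Z4" and j_less_4: "j < 4"
  using edge_in_E by (auto simp: E_def is_edge_def)

lemma bdry_subset_E_of_cobdry_bdry_cobdry:
  "p \<in> cobdry (x, j, s) \<Longrightarrow> f \<in> bdry p \<Longrightarrow> q \<in> cobdry f \<Longrightarrow> bdry q \<subseteq> E N"
  using neighbourhood_in_E by (auto simp: bdry_set_def cobdry_set_def)

lemma bdry_subset_E_of_cobdry: "p \<in> cobdry (x, j, s) \<Longrightarrow> bdry p \<subseteq> E N"
  using bdry_subset_E_of_cobdry_bdry_cobdry[of p "(x, j, s)" p] by (simp add: cobdry_def)

lemma exists_cobdry_orientation:
  assumes "(m, c) \<in> transverse j"
  obtains p where "p \<in> cobdry (x, j, s)" "pos_plaq p = plaq_around x j m c"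
proof -
  have m: "m \<noteq> j" "m < 4" "c \<in> {1, -1}"
    using assms by (auto simp: transverse_def)
  have "is_plaq (plaq_around x j m c)"
    using is_plaq_plaq_around[OF x_in_Z4 j_less_4 m(2,1)] .
  moreover have "pos_edge (x, j, s) \<in> pos_edge ` bdry (plaq_around x j m c)"
    using edge_in_plaq_around[OF m(1,3)] by simp
  ultimately obtain p where "pos_plaq p = pos_plaq (plaq_around x j m c)" "is_plaq p" "(x, j, s) \<in> bdry p"
    by (rule exists_orientation_containing)
  then show ?thesis
    using that by (simp add: cobdry_def)
qed

lemma bdry_subset_E_if_shares_edge:
  assumes "(m, c) \<in> transverse j" "G \<in> pos_edge ` bdry (plaq_around x j m c)"
    and "is_plaq Q" "G \<in> pos_edge ` bdry Q"
  shows "bdry Q \<subseteq> E N"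
proof -
  obtain p where p: "p \<in> cobdry (x, j, s)" "pos_plaq p = plaq_around x j m c"
    using exists_cobdry_orientation[OF assms(1)] .
  have "G \<in> pos_edge ` bdry p"
    using assms(2) p(2) pos_edge_image_bdry_pos_plaq[of p] by simp
  then obtain f where f: "f \<in> bdry p" "G = pos_edge f"
    by blast
  have "pos_edge f \<in> pos_edge ` bdry Q"
    using assms(4) f(2) by simp
  then obtain q where q: "pos_plaq q = pos_plaq Q" "is_plaq q" "f \<in> bdry q"
    by (rule exists_orientation_containing[OF assms(3)])
  have "bdry q \<subseteq> E N"
    using q(2,3) by (intro bdry_subset_E_of_cobdry_bdry_cobdry[OF p(1) f(1)]) (simp add: cobdry_def)
  then have "bdry (pos_plaq Q) \<subseteq> E N"
    by (simp only: bdry_pos_plaq_subset_E_iff flip: q(1))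
  then show ?thesis
    by (simp only: bdry_pos_plaq_subset_E_iff)
qed

lemma plaq_around_in_P:
  assumes "(m, c) \<in> transverse j"
  shows "plaq_around x j m c \<in> P N"
proof -
  have m: "m \<noteq> j" "m < 4" "c \<in> {1, -1}"
    using assms by (auto simp: transverse_def)
  have "is_plaq (plaq_around x j m c)"
    using is_plaq_plaq_around[OF x_in_Z4 j_less_4 m(2,1)] .
  moreover from this have "bdry (plaq_around x j m c) \<subseteq> E N"
    using bdry_subset_E_if_shares_edge[OF assms edge_in_plaq_around[OF m(1,3)]]
      edge_in_plaq_around[OF m(1,3)] by blast
  ultimately show ?thesis
    by (rule in_P_if_bdry_subset_E)
qed

definition witness :: "nat \<Rightarrow> int \<Rightarrow> edge" where
  "witness m c = (SOME f. f \<in> edge_supp_pos N \<sigma> \<and> f \<noteq> (x, j, True) \<and>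
     f \<in> pos_edge ` bdry (plaq_around x j m c))"

lemma witness:
  assumes "(m, c) \<in> transverse j"
  shows "witness m c \<in> edge_supp_pos N \<sigma>" "witness m c \<noteq> (x, j, True)"
    and "witness m c \<in> pos_edge ` bdry (plaq_around x j m c)"
proof -
  obtain p where p: "p \<in> cobdry (x, j, s)" "pos_plaq p = plaq_around x j m c"
    using exists_cobdry_orientation[OF assms] .
  then have p_plaq: "is_plaq p" and e_in_p: "(x, j, s) \<in> bdry p"
    by (simp_all add: cobdry_def)
  obtain f where f: "f \<in> bdry p" "f \<noteq> (x, j, s)" "\<sigma> f \<noteq> 0"
    using exists_other_edge_in_supp[OF e_in_p _ g_nonzero] excitation p(1) by blast
  have "f \<in> E N"
    using bdry_subset_E_of_cobdry[OF p(1)] f(1) by blast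
  then have "pos_edge f \<in> edge_supp_pos N \<sigma>"
    using f(3) E_pos_edge Sigma_zero_iff_pos_edge[OF sigma_in_Sigma \<open>f \<in> E N\<close>]
    by (simp add: edge_supp_pos_def)
  moreover have "pos_edge f \<noteq> (x, j, True)"
    using inj_on_contraD[OF inj_on_pos_edge_bdry[OF p_plaq] f(2,1) e_in_p] by simp
  moreover have "pos_edge f \<in> pos_edge ` bdry (plaq_around x j m c)"
    using f(1) p(2) pos_edge_image_bdry_pos_plaq[of p] by simp
  ultimately have "\<exists>f. f \<in> edge_supp_pos N \<sigma> \<and> f \<noteq> (x, j, True) \<and>
      f \<in> pos_edge ` bdry (plaq_around x j m c)"
    by blast
  from someI_ex[OF this] show "witness m c \<in> edge_supp_pos N \<sigma>" "witness m c \<noteq> (x, j, True)"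
    and "witness m c \<in> pos_edge ` bdry (plaq_around x j m c)"
    unfolding witness_def by blast+
qed

lemma witness_in_edge_box_edges:
  "(m, c) \<in> transverse j \<Longrightarrow> witness m c \<in> edge_box_edges x j"
  by (rule plaq_around_edges_in_edge_box[OF _ witness(3)])

lemma inj_on_witness: "inj_on (case_prod witness) (transverse j)"
proof (rule inj_onI, clarify)
  fix m c m' c'
  assume mc: "(m, c) \<in> transverse j" "(m', c') \<in> transverse j"
    and eq: "witness m c = witness m' c'"
  show "m = m' \<and> c = c'"
  proof (rule ccontr)
    assume "\<not> (m = m' \<and> c = c')"
    then have "witness m c = (x, j, True)"
      using plaq_around_common_edge[OF mc] witness(3)[OF mc(1)] witness(3)[OF mc(2)] eq by simp
    then show False
      using witness(2)[OF mc(1)] by simp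
  qed
qed

lemma card_witnesses: "card (case_prod witness ` transverse j) = 6"
  using card_image[OF inj_on_witness] card_transverse[OF j_less_4] by simp

lemma edge_supp_pos_eq_witnesses:
  assumes "card (edge_supp_pos N \<sigma>) \<le> 6"
  shows "edge_supp_pos N \<sigma> = case_prod witness ` transverse j"
proof -
  have sub: "case_prod witness ` transverse j \<subseteq> edge_supp_pos N \<sigma>"
    using witness(1) by (clarsimp simp only: image_subset_iff case_prod_beta) (metis prod.collapse)
  have fin: "finite (edge_supp_pos N \<sigma>)"
    using finite_E by (simp add: edge_supp_pos_def)
  show ?thesis
    using card_subset_eq[OF fin sub] card_mono[OF fin sub] card_witnesses assms by simp
qed

lemma sigma_edge_zero:
  assumes "edge_supp_pos N \<sigma> = case_prod witness ` transverse j"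
  shows "\<sigma> (x, j, s) = 0"
proof (rule ccontr)
  assume "\<sigma> (x, j, s) \<noteq> 0"
  then have "(x, j, True) \<in> edge_supp_pos N \<sigma>"
    using E_pos_edge[OF edge_in_E] Sigma_zero_iff_pos_edge[OF sigma_in_Sigma edge_in_E]
    by (simp add: edge_supp_pos_def)
  then obtain m c where "(m, c) \<in> transverse j" "witness m c = (x, j, True)"
    using assms by auto
  then show False
    using witness(2) by blast
qed

lemma plaq_around_in_plaq_supp_pos:
  assumes "\<sigma> (x, j, s) = 0" "(m, c) \<in> transverse j"
  shows "plaq_around x j m c \<in> plaq_supp_pos n N \<sigma>"
proof -
  obtain p where p: "p \<in> cobdry (x, j, s)" "pos_plaq p = plaq_around x j m c"
    using exists_cobdry_orientation[OF assms(2)] .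
  have "dsig n \<sigma> p = g"
    using excitation p(1) assms(1) by (simp add: dsig_def)
  moreover have "bdry p \<subseteq> E N"
    by (rule bdry_subset_E_of_cobdry[OF p(1)])
  ultimately have "dsig n \<sigma> (plaq_around x j m c) \<noteq> 0"
    using dsig_pos_plaq_zero_iff[OF sigma_in_Sigma] g_nonzero p(2) by metis
  then show ?thesis
    using plaq_around_in_P[OF assms(2)] by (simp add: plaq_supp_pos_def)
qed

definition escape :: "nat \<Rightarrow> int \<Rightarrow> plaq" where
  "escape m c = (SOME Q. is_plaq Q \<and> ppos Q \<and> witness m c \<in> pos_edge ` bdry Q \<and>
     (\<forall>G\<in>pos_edge ` bdry Q. G = witness m c \<or> G \<notin> edge_box_edges x j))"

lemma escape:
  assumes "(m, c) \<in> transverse j"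
  shows "is_plaq (escape m c)" "ppos (escape m c)" "witness m c \<in> pos_edge ` bdry (escape m c)"
    and "\<And>G. G \<in> pos_edge ` bdry (escape m c) \<Longrightarrow> G = witness m c \<or> G \<notin> edge_box_edges x j"
proof -
  have "is_edge (witness m c)"
    using witness(1)[OF assms] by (simp add: edge_supp_pos_def E_def)
  then obtain Q where "is_plaq Q" "ppos Q" "witness m c \<in> pos_edge ` bdry Q"
    "\<And>G. G \<in> pos_edge ` bdry Q \<Longrightarrow> G = witness m c \<or> G \<notin> edge_box_edges x j"
    using exists_escape_plaq[OF x_in_Z4 j_less_4 witness_in_edge_box_edges[OF assms]]
      witness(2)[OF assms] by blast
  then have "\<exists>Q. is_plaq Q \<and> ppos Q \<and> witness m c \<in> pos_edge ` bdry Q \<and>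
     (\<forall>G\<in>pos_edge ` bdry Q. G = witness m c \<or> G \<notin> edge_box_edges x j)"
    by blast
  from someI_ex[OF this]
  show "is_plaq (escape m c)" "ppos (escape m c)" "witness m c \<in> pos_edge ` bdry (escape m c)"
    and "\<And>G. G \<in> pos_edge ` bdry (escape m c) \<Longrightarrow> G = witness m c \<or> G \<notin> edge_box_edges x j"
    unfolding escape_def by blast+
qed

lemma edge_supp_pos_subset_edge_box_edges:
  assumes "edge_supp_pos N \<sigma> = case_prod witness ` transverse j"
  shows "edge_supp_pos N \<sigma> \<subseteq> edge_box_edges x j"
proof -
  have "case_prod witness mc \<in> edge_box_edges x j" if "mc \<in> transverse j" for mc
    using that witness_in_edge_box_edges by (cases mc) simp
  then show ?thesis
    unfolding assms by (rule image_subsetI)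
qed

lemma escape_in_plaq_supp_pos:
  assumes minimal: "edge_supp_pos N \<sigma> = case_prod witness ` transverse j"
    and mc: "(m, c) \<in> transverse j"
  shows "escape m c \<in> plaq_supp_pos n N \<sigma>"
proof -
  let ?Q = "escape m c"
  have QE: "bdry ?Q \<subseteq> E N"
    by (rule bdry_subset_E_if_shares_edge[OF mc witness(3)[OF mc] escape(1,3)[OF mc]])
  obtain f0 where f0_witness: "witness m c = pos_edge f0" and f0: "f0 \<in> bdry ?Q"
    using escape(3)[OF mc] by (rule imageE)
  have "\<sigma> f = 0" if f: "f \<in> bdry ?Q - {f0}" for f
  proof -
    have "f \<noteq> f0" "f \<in> bdry ?Q"
      using f by simp_all
    then have "pos_edge f \<noteq> witness m c"
      using inj_on_contraD[OF inj_on_pos_edge_bdry[OF escape(1)[OF mc]] _ _ f0] f0_witness[symmetric] by simp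
    then have "pos_edge f \<notin> edge_box_edges x j"
      using escape(4)[OF mc] f by blast
    then have "pos_edge f \<notin> edge_supp_pos N \<sigma>"
      using edge_supp_pos_subset_edge_box_edges[OF minimal] by blast
    moreover have "f \<in> E N"
      using QE f by blast
    ultimately show "\<sigma> f = 0"
      using E_pos_edge Sigma_zero_iff_pos_edge[OF sigma_in_Sigma \<open>f \<in> E N\<close>]
      by (simp add: edge_supp_pos_def)
  qed
  then have "dsig n \<sigma> ?Q = \<sigma> f0 mod n"
    by (intro dsig_eq_single_edge[OF f0]) blast
  moreover have "f0 \<in> E N"
    using QE f0 by blast
  moreover have "\<sigma> f0 \<noteq> 0"
    using witness(1)[OF mc] f0_witness[symmetric] Sigma_zero_iff_pos_edge[OF sigma_in_Sigma \<open>f0 \<in> E N\<close>]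
    by (simp add: edge_supp_pos_def)
  ultimately have "dsig n \<sigma> ?Q \<noteq> 0"
    using Sigma_range[OF sigma_in_Sigma] by simp
  then show ?thesis
    using in_P_if_bdry_subset_E[OF escape(1)[OF mc] QE] escape(2)[OF mc]
    by (simp add: plaq_supp_pos_def)
qed

lemma inj_on_escape: "inj_on (case_prod escape) (transverse j)"
proof (rule inj_onI, clarify)
  fix m c m' c'
  assume mc: "(m, c) \<in> transverse j" "(m', c') \<in> transverse j"
    and eq: "escape m c = escape m' c'"
  have "witness m' c' \<in> pos_edge ` bdry (escape m c)"
    using escape(3)[OF mc(2)] eq by simp
  then have "witness m' c' = witness m c"
    using escape(4)[OF mc(1)] witness_in_edge_box_edges[OF mc(2)] by blast
  then show "m = m' \<and> c = c'"
    using inj_onD[OF inj_on_witness _ mc(2,1)] by simp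
qed

lemma plaq_around_neq_escape:
  assumes "(m, c) \<in> transverse j" "(m', c') \<in> transverse j"
  shows "plaq_around x j m c \<noteq> escape m' c'"
proof
  have mc: "m \<noteq> j" "c \<in> {1, -1}"
    using assms(1) by (auto simp: transverse_def)
  assume eq: "plaq_around x j m c = escape m' c'"
  have "(x, j, True) \<in> pos_edge ` bdry (escape m' c')"
    using edge_in_plaq_around[OF mc, of x] unfolding eq .
  moreover have "(x, j, True) \<in> edge_box_edges x j"
    using plaq_around_edges_in_edge_box[OF assms(1) edge_in_plaq_around[OF mc]] .
  ultimately have "(x, j, True) = witness m' c'"
    using escape(4)[OF assms(2)] by blast
  then show False
    using witness(2)[OF assms(2)] by simp
qed

lemma card_plaq_supp_pos_ge_12:
  assumes "edge_supp_pos N \<sigma> = case_prod witness ` transverse j"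
  shows "12 \<le> card (plaq_supp_pos n N \<sigma>)"
proof -
  let ?A = "(\<lambda>(m, c). plaq_around x j m c) ` transverse j"
  let ?B = "case_prod escape ` transverse j"
  have "card ?A = 6" "card ?B = 6"
    using card_image[OF inj_on_plaq_around] card_image[OF inj_on_escape] card_transverse[OF j_less_4]
    by simp_all
  moreover have "?A \<inter> ?B = {}"
    using plaq_around_neq_escape by fastforce
  ultimately have "card (?A \<union> ?B) = 12"
    using card_Un_disjoint[of ?A ?B] finite_transverse by simp
  moreover have "?A \<union> ?B \<subseteq> plaq_supp_pos n N \<sigma>"
    using plaq_around_in_plaq_supp_pos[OF sigma_edge_zero[OF assms]] escape_in_plaq_supp_pos[OF assms]
    by auto
  moreover have "finite (plaq_supp_pos n N \<sigma>)"
    using finite_P by (simp add: plaq_supp_pos_def)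
  ultimately show ?thesis
    using card_mono by metis
qed

end

theorem mainTheorem6:
  fixes n :: int and N :: nat and g :: int and e :: edge and \<sigma> :: "edge \<Rightarrow> int"
  assumes "g \<in> {0..<n}" and "g \<noteq> 0"
    and "e \<in> E N"
    and "\<sigma> \<in> Sigma n N"
    and "\<forall>p\<in>cobdry e. (dsig n \<sigma> p - \<sigma> e) mod n = g"
    and "bdry_set (cobdry_set (bdry_set (cobdry e))) \<subseteq> E N"
  shows "card {f \<in> E N. epos f \<and> \<sigma> f \<noteq> 0} \<ge> 7 \<or>
         (card {f \<in> E N. epos f \<and> \<sigma> f \<noteq> 0} = 6 \<and>
          card {p \<in> P N. ppos p \<and> dsig n \<sigma> p \<noteq> 0} \<ge> 12)"
proof -
  obtain x j s where e: "e = (x, j, s)"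
    by (cases e)
  interpret excited_edge n N g x j s \<sigma>
    using assms e by unfold_locales simp_all
  show ?thesis
  proof (cases "card (edge_supp_pos N \<sigma>) \<le> 6")
    case True
    then have minimal: "edge_supp_pos N \<sigma> = case_prod witness ` transverse j"
      by (rule edge_supp_pos_eq_witnesses)
    then have "card (edge_supp_pos N \<sigma>) = 6"
      using card_witnesses by simp
    moreover have "12 \<le> card (plaq_supp_pos n N \<sigma>)"
      using card_plaq_supp_pos_ge_12[OF minimal] .
    ultimately show ?thesis
      by (simp add: edge_supp_pos_def plaq_supp_pos_def)
  next
    case False
    then show ?thesis
      by (simp add: edge_supp_pos_def)
  qed
qed

end
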